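(* Let $n\ge 2$, $T=n$, $I=J=\{1,\dots,n\}$, and $E=\{(i,1):i\in I\}\cup\{(j,j):j=2,\dots,n\}$. Then the clairvoyant optimum of IFM on this instance is at least $1-1/e$, while under RANKING the offline agent $1$ satisfies $\mathbb E[Z_1]=O(1/n)$. Hence RANKING has competitive ratio $0$ for IFM.
   Context: Model. An instance consists of a finite bipartite graph $(I,J,E)$, where $I$ is the set of offline agents and $J$ the set of online agent types, with $|J|=T$. For $j\in J$ let $\mathcal N_j=\{i\in I:(i,j)\in E\}$. There are $T$ rounds $t=1,\dots,T$; in each round exactly one online agent arrives, whose type is drawn uniformly at random from $J$ (each type with probability $1/T$), independently across rounds. Each offline agent can be matched at most once. When an online agent of type $j$ arrives, an online algorithm must immediately and irrevocably either reject it or match it to a currently unmatched $i\in\mathcal N_j$. Let $Z_i$ be the indicator that offline agent $i$ is matched by the end. IFM maximizes $\min_{i\in I}\mathbb E[Z_i]$. A clairvoyant policy observes the entire arrival sequence before choosing (possibly randomly) which arrivals to match to which compatible unmatched offline agents; the clairvoyant optimum is the supremum of $\min_i\mathbb E[Z_i]$ over clairvoyant policies. RANKING: before the online phase draw a uniformly random permutation $\pi$ of $I$; when an online agent of type $j$ arrives, match it to the currently unmatched neighbor of $j$ that comes earliest in $\pi$, or reject if none exists. *)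

theory Defs
  imports "HOL-Probability.Probability"
begin

text \<open>An IFM instance: offline agents I, online types J, edges E \<subseteq> I \<times> J
 (pairs (i,j)), T rounds indexed 0..<T. An arrival sequence is a function
 s with s t \<in> J for t < T (extensional outside), drawn uniformly, i.e.
 i.i.d. uniform types.\<close>

definition arrivals :: "nat set \<Rightarrow> nat \<Rightarrow> (nat \<Rightarrow> nat) pmf" where
  "arrivals J T = pmf_of_set (PiE {..<T} (\<lambda>_. J))"

definition valid_matching ::
  "nat set \<Rightarrow> (nat \<times> nat) set \<Rightarrow> nat \<Rightarrow> (nat \<Rightarrow> nat) \<Rightarrow> (nat \<Rightarrow> nat option) \<Rightarrow> bool" where
  "valid_matching I E T s m \<longleftrightarrow>
     (\<forall>t. T \<le> t \<longrightarrow> m t = None) \<and>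
     (\<forall>t<T. \<forall>i. m t = Some i \<longrightarrow> i \<in> I \<and> (i, s t) \<in> E) \<and>
     (\<forall>t1 t2 i. m t1 = Some i \<and> m t2 = Some i \<longrightarrow> t1 = t2)"

definition clairvoyant_policy ::
  "nat set \<Rightarrow> nat set \<Rightarrow> (nat \<times> nat) set \<Rightarrow> nat \<Rightarrow>
   ((nat \<Rightarrow> nat) \<Rightarrow> (nat \<Rightarrow> nat option) pmf) \<Rightarrow> bool" where
  "clairvoyant_policy I J E T P \<longleftrightarrow>
     (\<forall>s \<in> PiE {..<T} (\<lambda>_. J). set_pmf (P s) \<subseteq> {m. valid_matching I E T s m})"

definition clair_match_prob ::
  "nat set \<Rightarrow> nat \<Rightarrow> ((nat \<Rightarrow> nat) \<Rightarrow> (nat \<Rightarrow> nat option) pmf) \<Rightarrow> nat \<Rightarrow> real" where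
  "clair_match_prob J T P i =
     measure_pmf.prob (bind_pmf (arrivals J T) P) {m. \<exists>t<T. m t = Some i}"

definition clair_opt :: "nat set \<Rightarrow> nat set \<Rightarrow> (nat \<times> nat) set \<Rightarrow> nat \<Rightarrow> real" where
  "clair_opt I J E T =
     (SUP P \<in> {P. clairvoyant_policy I J E T P}. Min ((clair_match_prob J T P) ` I))"

text \<open>RANKING. A random permutation \<pi> of I; agent i comes before i' iff
 \<pi> i < \<pi> i'. The run returns the set of matched offline agents after t rounds.\<close>

definition ranking_step ::
  "nat set \<Rightarrow> (nat \<times> nat) set \<Rightarrow> (nat \<Rightarrow> nat) \<Rightarrow> nat \<Rightarrow> nat set \<Rightarrow> nat set" where
  "ranking_step I E \<pi> j M =
     (let C = {i \<in> I. (i, j) \<in> E \<and> i \<notin> M}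
      in if C = {} then M else insert (arg_min \<pi> (\<lambda>i. i \<in> C)) M)"

primrec ranking_run ::
  "nat set \<Rightarrow> (nat \<times> nat) set \<Rightarrow> (nat \<Rightarrow> nat) \<Rightarrow> (nat \<Rightarrow> nat) \<Rightarrow> nat \<Rightarrow> nat set" where
  "ranking_run I E \<pi> s 0 = {}"
| "ranking_run I E \<pi> s (Suc t) = ranking_step I E \<pi> (s t) (ranking_run I E \<pi> s t)"

definition ranking_match_prob ::
  "nat set \<Rightarrow> nat set \<Rightarrow> (nat \<times> nat) set \<Rightarrow> nat \<Rightarrow> nat \<Rightarrow> real" where
  "ranking_match_prob I J E T i =
     measure_pmf.prob (pair_pmf (pmf_of_set {\<pi>. \<pi> permutes I}) (arrivals J T))
       {(\<pi>, s). i \<in> ranking_run I E \<pi> s T}"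

definition hard_edges :: "nat \<Rightarrow> (nat \<times> nat) set" where
  "hard_edges n = {(i, 1) | i. i \<in> {1..n}} \<union> {(j, j) | j. j \<in> {2..n}}"

end

theory Submission
  imports Defs
begin

text \<open>Clairvoyantly, matching the first arrival of each type \<open>j\<close> to agent \<open>j\<close> matches every
  agent with probability \<open>1 - (1 - 1/n)^n \<ge> 1 - 1/e\<close>.

  Under RANKING, fix the arrivals and let \<open>G\<close> consist of agent 1 and the agents \<open>j \<ge> 2\<close>
  whose type never arrives. Only type-1 arrivals can match agents of \<open>G\<close>, and when agent 1 is
  matched so is every agent ranked above it; hence agent 1 is matched only if its rank within
  \<open>G\<close> is at most the number \<open>K\<close> of type-1 arrivals, which has probability at most \<open>K / |G|\<close>
  over the random permutation. Turning an arrival into type 1 can only enlarge \<open>G\<close>, so by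
  symmetry \<open>E[K / |G|] \<le> E[1 / |G|]\<close>; and \<open>|G| - 1\<close>, the number of unseen types, has mean of
  order \<open>n / e\<close> and variance at most its mean, so \<open>E[1 / |G|] = O(1 / n)\<close>.\<close>

section \<open>Uniformly random arrival sequences\<close>

lemma measure_pair_pmf_of_set:
  assumes A: "finite A" "A \<noteq> {}" and B: "finite B" "B \<noteq> {}"
  shows "measure_pmf.prob (pair_pmf (pmf_of_set A) (pmf_of_set B)) X
    = (\<Sum>b\<in>B. real (card {a \<in> A. (a, b) \<in> X})) / (real (card A) * real (card B))"
proof -
  have "pair_pmf (pmf_of_set A) (pmf_of_set B) = pmf_of_set (A \<times> B)"
  proof (rule pmf_eqI)
    fix x :: "'a \<times> 'b"
    show "pmf (pair_pmf (pmf_of_set A) (pmf_of_set B)) x = pmf (pmf_of_set (A \<times> B)) x"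
      using A B by (cases x) (simp add: pmf_pair indicator_def card_cartesian_product)
  qed
  moreover have "(A \<times> B) \<inter> X = prod.swap ` (SIGMA b:B. {a \<in> A. (a, b) \<in> X})"
    by force
  then have "card ((A \<times> B) \<inter> X) = (\<Sum>b\<in>B. card {a \<in> A. (a, b) \<in> X})"
    using A B by (simp add: card_image)
  ultimately show ?thesis
    using A B by (simp add: measure_pmf_of_set card_cartesian_product)
qed

lemma fun_upd_in_PiE_lessThan:
  "s \<in> PiE {..<T} (\<lambda>_. A) \<Longrightarrow> t < T \<Longrightarrow> a \<in> A \<Longrightarrow> s(t := a) \<in> PiE {..<T} (\<lambda>_. A)"
  using PiE_fun_upd[of a "\<lambda>_. A" t s "{..<T}"] by (simp add: insert_absorb)

lemma card_PiE_avoiding: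
  assumes "finite A" "B \<subseteq> A"
  shows "card {s \<in> PiE {..<T} (\<lambda>_. A). \<forall>t<T. s t \<notin> B} = (card A - card B) ^ T"
proof -
  have "{s \<in> PiE {..<T} (\<lambda>_. A). \<forall>t<T. s t \<notin> B} = PiE {..<T} (\<lambda>_. A - B)"
    by (rule set_eqI) (simp add: PiE_iff, blast)
  then show ?thesis
    using assms by (simp add: card_PiE card_Diff_subset finite_subset)
qed

lemma sum_PiE_fixed_coordinate_le:
  fixes F :: "(nat \<Rightarrow> 'a) \<Rightarrow> real" and A :: "'a set" and T :: nat
  defines "S \<equiv> PiE {..<T} (\<lambda>_. A)"
  assumes A: "finite A" "a \<in> A" and t: "t < T"
    and F_upd: "\<And>s. s \<in> S \<Longrightarrow> F (s(t := a)) \<le> F s"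
  shows "real (card A) * (\<Sum>s\<in>{s \<in> S. s t = a}. F s) \<le> (\<Sum>s\<in>S. F s)"
proof -
  have fixed_le: "(\<Sum>s\<in>{s \<in> S. s t = a}. F s) \<le> (\<Sum>s\<in>{s \<in> S. s t = b}. F s)"
    if b: "b \<in> A" for b
  proof -
    have "(\<Sum>s\<in>{s \<in> S. s t = a}. F s) = (\<Sum>s\<in>{s \<in> S. s t = b}. F (s(t := a)))"
    proof (rule sum.reindex_bij_witness[where i = "\<lambda>s. s(t := a)" and j = "\<lambda>s. s(t := b)"])
      fix s assume s: "s \<in> {s \<in> S. s t = a}"
      then show "s(t := b, t := a) = s" "F (s(t := b, t := a)) = F s"
        by auto
      show "s(t := b) \<in> {s \<in> S. s t = b}"
        using s t b by (simp add: S_def fun_upd_in_PiE_lessThan)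
    next
      fix s assume s: "s \<in> {s \<in> S. s t = b}"
      then show "s(t := a, t := b) = s"
        by auto
      show "s(t := a) \<in> {s \<in> S. s t = a}"
        using s t A by (simp add: S_def fun_upd_in_PiE_lessThan)
    qed
    also have "\<dots> \<le> (\<Sum>s\<in>{s \<in> S. s t = b}. F s)"
      using F_upd by (intro sum_mono) blast
    finally show ?thesis .
  qed
  have "finite S"
    using A by (simp add: S_def finite_PiE)
  moreover have "(\<lambda>s. s t) ` S \<subseteq> A"
    using t by (auto simp: S_def PiE_iff)
  ultimately have "(\<Sum>s\<in>S. F s) = (\<Sum>b\<in>A. \<Sum>s\<in>{s \<in> S. s t = b}. F s)"
    using A by (simp add: sum.group)
  also have "\<dots> \<ge> (\<Sum>b\<in>A. \<Sum>s\<in>{s \<in> S. s t = a}. F s)"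
    by (rule sum_mono) (rule fixed_le)
  finally show ?thesis
    by simp
qed

lemma sum_PiE_count_le:
  fixes F :: "(nat \<Rightarrow> 'a) \<Rightarrow> real" and A :: "'a set" and T :: nat
  defines "S \<equiv> PiE {..<T} (\<lambda>_. A)"
  assumes A: "finite A" "a \<in> A"
    and F_upd: "\<And>s t. s \<in> S \<Longrightarrow> t < T \<Longrightarrow> F (s(t := a)) \<le> F s"
  shows "real (card A) * (\<Sum>s\<in>S. real (card {t. t < T \<and> s t = a}) * F s)
    \<le> real T * (\<Sum>s\<in>S. F s)"
proof -
  have "finite S"
    using A by (simp add: S_def finite_PiE)
  have count: "real (card {t. t < T \<and> s t = a}) = (\<Sum>t<T. if s t = a then 1 else 0)" for s
    by (simp add: sum.If_cases Int_def)
  have "(\<Sum>s\<in>S. real (card {t. t < T \<and> s t = a}) * F s)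
      = (\<Sum>s\<in>S. \<Sum>t<T. if s t = a then F s else 0)"
    unfolding count sum_distrib_right by (intro sum.cong) auto
  also have "\<dots> = (\<Sum>t<T. \<Sum>s\<in>{s \<in> S. s t = a}. F s)"
    using \<open>finite S\<close> by (subst sum.swap) (simp add: sum.If_cases Int_def)
  finally have "(\<Sum>s\<in>S. real (card {t. t < T \<and> s t = a}) * F s)
      = (\<Sum>t<T. \<Sum>s\<in>{s \<in> S. s t = a}. F s)" .
  then have "real (card A) * (\<Sum>s\<in>S. real (card {t. t < T \<and> s t = a}) * F s)
      = (\<Sum>t<T. real (card A) * (\<Sum>s\<in>{s \<in> S. s t = a}. F s))"
    by (simp add: sum_distrib_left)
  also have "\<dots> \<le> (\<Sum>t<T. \<Sum>s\<in>S. F s)"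
    using A F_upd unfolding S_def by (intro sum_mono sum_PiE_fixed_coordinate_le) auto
  finally show ?thesis
    by simp
qed

definition unseen :: "'a set \<Rightarrow> nat \<Rightarrow> (nat \<Rightarrow> 'a) \<Rightarrow> 'a set" where
  "unseen B T s = {b \<in> B. \<forall>t<T. s t \<noteq> b}"

lemma unseen_fun_upd: "a \<notin> B \<Longrightarrow> unseen B T s \<subseteq> unseen B T (s(t := a))"
  unfolding unseen_def by auto

lemma finite_unseen: "finite B \<Longrightarrow> finite (unseen B T s)"
  unfolding unseen_def by simp

lemma sum_card_unseen:
  assumes "finite A" "B \<subseteq> A"
  shows "(\<Sum>s\<in>PiE {..<T} (\<lambda>_. A). card (unseen B T s)) = card B * (card A - 1) ^ T"
proof -
  let ?S = "PiE {..<T} (\<lambda>_. A)"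
  have "finite ?S" "finite B"
    using assms by (auto simp: finite_PiE finite_subset)
  have "(\<Sum>s\<in>?S. card (unseen B T s)) = (\<Sum>s\<in>?S. \<Sum>b\<in>B. if \<forall>t<T. s t \<notin> {b} then 1 else 0)"
    using \<open>finite B\<close> by (simp add: unseen_def sum.If_cases Int_def)
  also have "\<dots> = (\<Sum>b\<in>B. card {s \<in> ?S. \<forall>t<T. s t \<notin> {b}})"
    using \<open>finite ?S\<close> by (subst sum.swap) (simp add: sum.If_cases Int_def)
  also have "\<dots> = (\<Sum>b\<in>B. (card A - 1) ^ T)"
    using assms card_PiE_avoiding[of A "{_}" T] by (intro sum.cong) auto
  finally show ?thesis
    by simp
qed

lemma sum_card_unseen_squared:
  assumes "finite A" "B \<subseteq> A"
  shows "(\<Sum>s\<in>PiE {..<T} (\<lambda>_. A). card (unseen B T s) ^ 2)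
    = card B * (card A - 1) ^ T + card B * (card B - 1) * (card A - 2) ^ T"
proof -
  let ?S = "PiE {..<T} (\<lambda>_. A)"
  have "finite ?S" "finite B"
    using assms by (auto simp: finite_PiE finite_subset)
  have pairs: "(\<Sum>c\<in>B. (card A - card {b, c}) ^ T) = (card A - 1) ^ T + (card B - 1) * (card A - 2) ^ T"
    if "b \<in> B" for b
  proof -
    have "(\<Sum>c\<in>B. (card A - card {b, c}) ^ T)
        = (card A - card {b, b}) ^ T + (\<Sum>c\<in>B - {b}. (card A - card {b, c}) ^ T)"
      using that \<open>finite B\<close> by (simp add: sum.remove)
    also have "(\<Sum>c\<in>B - {b}. (card A - card {b, c}) ^ T) = (\<Sum>c\<in>B - {b}. (card A - 2) ^ T)"
      by (intro sum.cong) (auto simp: numeral_2_eq_2)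
    finally show ?thesis
      using that \<open>finite B\<close> by simp
  qed
  have "(\<Sum>s\<in>?S. card (unseen B T s) ^ 2)
      = (\<Sum>s\<in>?S. \<Sum>b\<in>B. \<Sum>c\<in>B. if \<forall>t<T. s t \<notin> {b, c} then 1 else 0)"
  proof (intro sum.cong refl)
    fix s
    have "card (unseen B T s) = (\<Sum>b\<in>B. if \<forall>t<T. s t \<noteq> b then 1 else 0)"
      using \<open>finite B\<close> by (simp add: unseen_def sum.If_cases Int_def)
    then have "card (unseen B T s) ^ 2
        = (\<Sum>b\<in>B. if \<forall>t<T. s t \<noteq> b then 1 else 0) * (\<Sum>c\<in>B. if \<forall>t<T. s t \<noteq> c then 1 else 0)"
      by (simp add: power2_eq_square)
    also have "\<dots> = (\<Sum>b\<in>B. \<Sum>c\<in>B. if \<forall>t<T. s t \<notin> {b, c} then 1 else 0)"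
      unfolding sum_product by (intro sum.cong refl) auto
    finally show "card (unseen B T s) ^ 2 = \<dots>" .
  qed
  also have "\<dots> = (\<Sum>b\<in>B. \<Sum>s\<in>?S. \<Sum>c\<in>B. if \<forall>t<T. s t \<notin> {b, c} then 1 else 0)"
    by (rule sum.swap)
  also have "\<dots> = (\<Sum>b\<in>B. \<Sum>c\<in>B. \<Sum>s\<in>?S. if \<forall>t<T. s t \<notin> {b, c} then 1 else 0)"
    by (intro sum.cong refl sum.swap)
  also have "\<dots> = (\<Sum>b\<in>B. \<Sum>c\<in>B. card {s \<in> ?S. \<forall>t<T. s t \<notin> {b, c}})"
    using \<open>finite ?S\<close> by (simp only: sum.If_cases Int_def) simp
  also have "\<dots> = (\<Sum>b\<in>B. \<Sum>c\<in>B. (card A - card {b, c}) ^ T)"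
    using assms by (intro sum.cong refl card_PiE_avoiding) auto
  also have "\<dots> = (\<Sum>b\<in>B. (card A - 1) ^ T + (card B - 1) * (card A - 2) ^ T)"
    using pairs by (intro sum.cong) auto
  finally show ?thesis
    by (simp add: algebra_simps)
qed

text \<open>The indicators of distinct unseen values are negatively correlated, because
  \<open>(N - 2) N \<le> (N - 1)\<^sup>2\<close>; hence the variance of their number is at most its mean.\<close>

lemma unseen_variance_le_mean:
  fixes A B :: "'a set" and T :: nat
  defines "S \<equiv> PiE {..<T} (\<lambda>_. A)"
    and "X \<equiv> \<lambda>s. real (card (unseen B T s))"
  defines "\<mu> \<equiv> (\<Sum>s\<in>S. X s) / real (card S)"
  assumes A: "finite A" "A \<noteq> {}" and B: "B \<subseteq> A"
  shows "(\<Sum>s\<in>S. (X s - \<mu>)\<^sup>2) \<le> (\<Sum>s\<in>S. X s)"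
proof -
  define a m where "a = card A" and "m = card B"
  define N where "N = real (card S)"
  have N: "N = real a ^ T" "N > 0"
    using A by (auto simp: N_def S_def a_def card_PiE card_gt_0_iff)
  have sum_X: "(\<Sum>s\<in>S. X s) = real (m * (a - 1) ^ T)"
    using sum_card_unseen[OF A(1) B, of T] unfolding X_def S_def a_def m_def by (simp flip: of_nat_sum)
  have sum_X2: "(\<Sum>s\<in>S. (X s)\<^sup>2) = real (m * (a - 1) ^ T) + real (m * (m - 1) * (a - 2) ^ T)"
    using sum_card_unseen_squared[OF A(1) B, of T] unfolding X_def S_def a_def m_def
    by (simp flip: of_nat_sum of_nat_power)
  have "(a - 2) * a \<le> (a - 1) * (a - 1)"
  proof (cases "a < 2")
    case False
    then obtain k where "a = k + 2"
      by (metis add.commute le_add_diff_inverse not_less)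
    then show ?thesis
      by (simp add: algebra_simps)
  qed auto
  then have "((a - 2) * a) ^ T \<le> ((a - 1) * (a - 1)) ^ T"
    by (rule power_mono) simp
  then have "(a - 2) ^ T * a ^ T \<le> (a - 1) ^ T * (a - 1) ^ T"
    by (simp add: power_mult_distrib)
  then have "m * (m - 1) * ((a - 2) ^ T * a ^ T) \<le> m * m * ((a - 1) ^ T * (a - 1) ^ T)"
    by (rule mult_mono[rotated]) auto
  then have "m * (m - 1) * (a - 2) ^ T * a ^ T \<le> (m * (a - 1) ^ T)\<^sup>2"
    by (simp add: power2_eq_square ac_simps)
  then have "real (m * (m - 1) * (a - 2) ^ T) * N \<le> (\<Sum>s\<in>S. X s)\<^sup>2"
    unfolding sum_X N(1) by (simp flip: of_nat_mult of_nat_power)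
  then have cross: "real (m * (m - 1) * (a - 2) ^ T) \<le> N * \<mu>\<^sup>2"
    using N(2) by (simp add: \<mu>_def N_def[symmetric] field_simps power2_eq_square)
  have "(\<Sum>s\<in>S. (X s - \<mu>)\<^sup>2) = (\<Sum>s\<in>S. (X s)\<^sup>2) - 2 * \<mu> * (\<Sum>s\<in>S. X s) + N * \<mu>\<^sup>2"
    by (simp add: power2_diff sum.distrib sum_subtractf sum_distrib_left sum_distrib_right N_def ac_simps)
  also have "\<dots> = (\<Sum>s\<in>S. (X s)\<^sup>2) - N * \<mu>\<^sup>2"
    using N(2) by (simp add: \<mu>_def N_def[symmetric] power2_eq_square)
  finally show ?thesis
    using cross unfolding sum_X2 sum_X by linarith
qed

section \<open>A second-moment bound\<close>

lemma inverse_succ_le_deviation: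
  fixes x \<mu> :: real
  assumes "\<mu> > 0" "x \<ge> 0"
  shows "1 / (x + 1) \<le> 2 / \<mu> + 4 * (x - \<mu>)\<^sup>2 / \<mu>\<^sup>2"
proof (cases "x \<ge> \<mu> / 2")
  case True
  then have "1 / (x + 1) \<le> 2 / \<mu>"
    using assms by (simp add: field_simps)
  then show ?thesis
    by (smt (verit) divide_nonneg_nonneg zero_le_power2)
next
  case False
  then have "(\<mu> / 2)\<^sup>2 \<le> (\<mu> - x)\<^sup>2"
    using assms by (intro power_mono) auto
  then have "(\<mu> / 2)\<^sup>2 \<le> (x - \<mu>)\<^sup>2"
    by (simp add: power2_commute)
  then have "1 \<le> 4 * (x - \<mu>)\<^sup>2 / \<mu>\<^sup>2"
    using assms by (simp add: field_simps power_divide)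
  moreover have "1 / (x + 1) \<le> 1"
    using assms by simp
  ultimately show ?thesis
    using assms by (smt (verit) divide_pos_pos)
qed

lemma sum_inverse_succ_le:
  fixes X :: "'a \<Rightarrow> real"
  assumes "finite S" "\<mu> > 0" "\<And>s. s \<in> S \<Longrightarrow> X s \<ge> 0"
    and var: "(\<Sum>s\<in>S. (X s - \<mu>)\<^sup>2) \<le> \<mu> * real (card S)"
  shows "(\<Sum>s\<in>S. 1 / (X s + 1)) \<le> 6 * real (card S) / \<mu>"
proof -
  have "(\<Sum>s\<in>S. 1 / (X s + 1)) \<le> (\<Sum>s\<in>S. 2 / \<mu> + 4 * (X s - \<mu>)\<^sup>2 / \<mu>\<^sup>2)"
    using assms by (intro sum_mono inverse_succ_le_deviation) auto
  also have "\<dots> = real (card S) * (2 / \<mu>) + 4 / \<mu>\<^sup>2 * (\<Sum>s\<in>S. (X s - \<mu>)\<^sup>2)"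
    by (simp add: sum.distrib sum_distrib_left)
  also have "\<dots> \<le> real (card S) * (2 / \<mu>) + 4 / \<mu>\<^sup>2 * (\<mu> * real (card S))"
    using var by (intro add_left_mono mult_left_mono) auto
  also have "\<dots> = 6 * real (card S) / \<mu>"
    using \<open>\<mu> > 0\<close> by (simp add: field_simps power2_eq_square)
  finally show ?thesis .
qed

lemma one_minus_inverse_power_le_exp:
  assumes "n \<ge> 1"
  shows "(1 - 1 / real n) ^ n \<le> exp (-1)"
proof -
  have "(1 - 1 / real n) ^ n \<le> exp (- (1 / real n)) ^ n"
    using assms exp_ge_add_one_self[of "- (1 / real n)"] by (intro power_mono) auto
  also have "\<dots> = exp (-1)"
    using assms by (simp flip: exp_of_nat_mult)
  finally show ?thesis .
qed

lemma exp_le_one_minus_inverse_power: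
  assumes "n \<ge> 2"
  shows "exp (-2) \<le> (1 - 1 / real n) ^ n"
proof -
  have "- (1 / real n) - 2 * (1 / real n)\<^sup>2 \<le> ln (1 - 1 / real n)"
    using assms by (intro ln_one_minus_pos_lower_bound) (auto simp: field_simps)
  moreover have "2 * (1 / real n)\<^sup>2 \<le> 1 / real n"
    using assms by (simp add: field_simps power2_eq_square)
  ultimately have "real n * (- 2 / real n) \<le> real n * ln (1 - 1 / real n)"
    by (intro mult_left_mono) auto
  then have "-2 \<le> real n * ln (1 - 1 / real n)"
    using assms by simp
  moreover have "(1 - 1 / real n) ^ n = exp (real n * ln (1 - 1 / real n))"
    using assms by (simp add: exp_of_nat_mult field_simps)
  ultimately show ?thesis
    by simp
qed

lemma sum_inverse_card_unseen_le:
  assumes n: "n \<ge> 2"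
  shows "(\<Sum>s\<in>PiE {..<n} (\<lambda>_. {1..n}). 1 / (real (card (unseen {2..n} n s)) + 1))
    \<le> 12 * exp 2 * real n ^ n / real n"
proof -
  define S where "S = PiE {..<n} (\<lambda>_. {1..n::nat})"
  define X where "X s = real (card (unseen {2..n} n s))" for s
  define \<mu> where "\<mu> = (\<Sum>s\<in>S. X s) / real (card S)"
  have card_S: "real (card S) = real n ^ n"
    by (simp add: S_def card_PiE)
  have "(\<Sum>s\<in>S. X s) = real (n - 1) * real (n - 1) ^ n"
    using sum_card_unseen[of "{1..n}" "{2..n}" n] unfolding X_def S_def by (simp flip: of_nat_sum)
  then have "\<mu> = real (n - 1) * (1 - 1 / real n) ^ n"
    using n by (simp add: \<mu>_def card_S of_nat_diff power_divide field_simps)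
  moreover have "real n / 2 * exp (-2) \<le> real (n - 1) * (1 - 1 / real n) ^ n"
    using n exp_le_one_minus_inverse_power[OF n] by (intro mult_mono) (auto simp: of_nat_diff)
  ultimately have \<mu>: "real n * exp (-2) \<le> 2 * \<mu>"
    by simp
  moreover have "real n * exp (-2) > 0"
    using n by simp
  ultimately have "\<mu> > 0"
    by linarith
  have "(\<Sum>s\<in>S. (X s - \<mu>)\<^sup>2) \<le> (\<Sum>s\<in>S. X s)"
    using unseen_variance_le_mean[of "{1..n}" "{2..n}" n] n
    unfolding S_def X_def \<mu>_def by simp
  also have "\<dots> = \<mu> * real (card S)"
    using n by (simp add: \<mu>_def card_S)
  finally have "(\<Sum>s\<in>S. (X s - \<mu>)\<^sup>2) \<le> \<mu> * real (card S)" .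
  then have "(\<Sum>s\<in>S. 1 / (X s + 1)) \<le> 6 * real (card S) / \<mu>"
    using \<open>\<mu> > 0\<close> by (intro sum_inverse_succ_le) (auto simp: S_def finite_PiE X_def)
  also have "\<dots> = 12 * real n ^ n / (2 * \<mu>)"
    by (simp add: card_S)
  also have "\<dots> \<le> 12 * real n ^ n / (real n * exp (-2))"
    using \<mu> n \<open>\<mu> > 0\<close> by (intro divide_left_mono) auto
  also have "\<dots> = 12 * exp 2 * real n ^ n / real n"
    by (simp add: exp_minus field_simps)
  finally show ?thesis
    by (simp add: S_def X_def)
qed

section \<open>Ranks under a uniformly random permutation\<close>

definition rank_within :: "'a set \<Rightarrow> ('a \<Rightarrow> 'b::linorder) \<Rightarrow> 'a \<Rightarrow> nat" where
  "rank_within G \<pi> g = card {h \<in> G. \<pi> h \<le> \<pi> g}"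

lemma card_rank_within_le:
  assumes "finite G"
  shows "card {g \<in> G. rank_within G \<pi> g \<le> k} \<le> k"
proof (cases "{g \<in> G. rank_within G \<pi> g \<le> k} = {}")
  case True
  then show ?thesis
    unfolding True by simp
next
  case False
  define H where "H = {g \<in> G. rank_within G \<pi> g \<le> k}"
  have "finite H"
    using assms by (simp add: H_def)
  moreover have "\<pi> ` H \<noteq> {}"
    using False by (simp add: H_def)
  ultimately have "Max (\<pi> ` H) \<in> \<pi> ` H"
    by (intro Max_in) auto
  then obtain h where h: "h \<in> H" "\<pi> h = Max (\<pi> ` H)"
    by auto
  then have "\<And>g. g \<in> H \<Longrightarrow> \<pi> g \<le> \<pi> h"
    using \<open>finite H\<close> by simp
  then have "H \<subseteq> {g \<in> G. \<pi> g \<le> \<pi> h}"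
    by (auto simp: H_def)
  then have "card H \<le> rank_within G \<pi> h"
    unfolding rank_within_def using assms by (intro card_mono) auto
  also have "\<dots> \<le> k"
    using h(1) by (simp add: H_def)
  finally show ?thesis
    by (simp add: H_def)
qed

lemma rank_within_comp_transpose:
  assumes "g \<in> G" "h \<in> G"
  shows "rank_within G (\<pi> \<circ> Transposition.transpose g h) g = rank_within G \<pi> h"
proof -
  have "{x \<in> G. (\<pi> \<circ> Transposition.transpose g h) x \<le> (\<pi> \<circ> Transposition.transpose g h) g}
      = Transposition.transpose g h ` {x \<in> G. \<pi> x \<le> \<pi> h}"
    using assms by (auto simp: Transposition.transpose_def image_iff split: if_splits)
  then show ?thesis
    unfolding rank_within_def by (simp add: card_image inj_on_transpose)
qed

lemma card_permutes_rank_within_eq: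
  fixes I G :: "'a::linorder set"
  assumes G: "G \<subseteq> I" "g \<in> G" "h \<in> G"
  shows "card {\<pi>. \<pi> permutes I \<and> rank_within G \<pi> h \<le> k}
    = card {\<pi>. \<pi> permutes I \<and> rank_within G \<pi> g \<le> k}"
proof -
  let ?R = "\<lambda>h. {\<pi>. \<pi> permutes I \<and> rank_within G \<pi> h \<le> k}"
  define \<tau> where "\<tau> = Transposition.transpose g h"
  have \<tau>: "\<tau> permutes I" "\<tau> \<circ> \<tau> = id"
    using G by (auto simp: \<tau>_def intro: permutes_swap_id)
  have image: "(\<lambda>\<pi>. \<pi> \<circ> \<tau>) ` ?R h = ?R g"
  proof safe
    fix \<pi> assume "\<pi> permutes I" "rank_within G \<pi> h \<le> k"
    then show "\<pi> \<circ> \<tau> permutes I" "rank_within G (\<pi> \<circ> \<tau>) g \<le> k"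
      using \<tau>(1) rank_within_comp_transpose[OF G(2,3), of \<pi>]
      by (simp_all add: \<tau>_def permutes_compose)
  next
    fix \<pi> assume \<pi>: "\<pi> permutes I" "rank_within G \<pi> g \<le> k"
    have "rank_within G (\<pi> \<circ> \<tau>) h = rank_within G \<pi> g"
      using rank_within_comp_transpose[OF G(2,3), of "\<pi> \<circ> \<tau>"] \<tau>(2)
      by (simp add: \<tau>_def comp_assoc)
    moreover have "\<pi> = \<pi> \<circ> \<tau> \<circ> \<tau>"
      using \<tau>(2) by (simp add: comp_assoc)
    ultimately show "\<pi> \<in> (\<lambda>\<pi>. \<pi> \<circ> \<tau>) ` ?R h"
      using \<pi> \<tau> by (intro image_eqI[of _ _ "\<pi> \<circ> \<tau>"]) (auto simp: permutes_compose)
  qed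
  have "inj (\<lambda>\<pi>. \<pi> \<circ> \<tau>)"
  proof (rule injI)
    fix \<pi> \<sigma>
    assume "\<pi> \<circ> \<tau> = \<sigma> \<circ> \<tau>"
    then have "\<pi> \<circ> \<tau> \<circ> \<tau> = \<sigma> \<circ> \<tau> \<circ> \<tau>"
      by simp
    then show "\<pi> = \<sigma>"
      using \<tau>(2) by (simp add: comp_assoc)
  qed
  then have "card ((\<lambda>\<pi>. \<pi> \<circ> \<tau>) ` ?R h) = card (?R h)"
    by (rule card_image[OF inj_on_subset[OF _ subset_UNIV]])
  then show ?thesis
    by (simp only: image)
qed

text \<open>Double counting: every agent of \<open>G\<close> has rank at most \<open>k\<close> for equally many
  permutations, and for each permutation at most \<open>k\<close> agents do.\<close>

lemma card_permutes_rank_within_le: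
  fixes I G :: "'a::linorder set"
  assumes I: "finite I" and G: "G \<subseteq> I" "g \<in> G"
  shows "card G * card {\<pi>. \<pi> permutes I \<and> rank_within G \<pi> g \<le> k} \<le> card {\<pi>. \<pi> permutes I} * k"
proof -
  let ?P = "{\<pi>. \<pi> permutes I}"
  let ?R = "\<lambda>h. {\<pi> \<in> ?P. rank_within G \<pi> h \<le> k}"
  have "finite ?P" "finite G"
    using I G by (auto simp: finite_permutations finite_subset)
  have "card G * card (?R g) = (\<Sum>h\<in>G. card (?R h))"
    using card_permutes_rank_within_eq[OF G] by simp
  also have "\<dots> = (\<Sum>h\<in>G. \<Sum>\<pi>\<in>?P. if rank_within G \<pi> h \<le> k then 1 else 0)"
    using \<open>finite ?P\<close> by (simp add: sum.If_cases Int_def)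
  also have "\<dots> = (\<Sum>\<pi>\<in>?P. \<Sum>h\<in>G. if rank_within G \<pi> h \<le> k then 1 else 0)"
    by (rule sum.swap)
  also have "\<dots> = (\<Sum>\<pi>\<in>?P. card {h \<in> G. rank_within G \<pi> h \<le> k})"
    using \<open>finite G\<close> by (simp add: sum.If_cases Int_def)
  also have "\<dots> \<le> (\<Sum>\<pi>\<in>?P. k)"
    using \<open>finite G\<close> by (intro sum_mono card_rank_within_le)
  finally show ?thesis
    by simp
qed

section \<open>RANKING\<close>

lemma ranking_step_cases:
  fixes \<pi> :: "nat \<Rightarrow> nat"
  obtains (reject) "ranking_step I E \<pi> j M = M"
  | (match) x where "x \<in> I" "(x, j) \<in> E" "x \<notin> M" "ranking_step I E \<pi> j M = insert x M"
      "\<And>y. y \<in> I \<Longrightarrow> (y, j) \<in> E \<Longrightarrow> y \<notin> M \<Longrightarrow> \<pi> x \<le> \<pi> y"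
proof (cases "{i \<in> I. (i, j) \<in> E \<and> i \<notin> M} = {}")
  case True
  then show ?thesis
    by (intro reject) (simp add: ranking_step_def)
next
  case False
  then obtain k where "k \<in> {i \<in> I. (i, j) \<in> E \<and> i \<notin> M}"
    by blast
  from arg_min_nat_lemma[of "\<lambda>i. i \<in> {i \<in> I. (i, j) \<in> E \<and> i \<notin> M}", OF this]
  show ?thesis
    using False by (intro match) (auto simp: ranking_step_def)
qed

lemma subset_ranking_step: "M \<subseteq> ranking_step I E \<pi> j M"
  by (cases rule: ranking_step_cases[of I E \<pi> j M]) auto

lemma finite_ranking_run: "finite (ranking_run I E \<pi> s t)"
proof (induction t)
  case (Suc t)
  then show ?case
    by (cases rule: ranking_step_cases[of I E \<pi> "s t" "ranking_run I E \<pi> s t"]) auto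
qed simp

text \<open>Each arrival matches at most one agent, and only an arrival with a neighbour in \<open>G\<close> can
  match an agent of \<open>G\<close>.\<close>

lemma card_ranking_run_Int_le:
  "card (ranking_run I E \<pi> s t \<inter> G) \<le> card {t'. t' < t \<and> (\<exists>g\<in>G. (g, s t') \<in> E)}"
proof (induction t)
  case (Suc t)
  define M where "M = ranking_run I E \<pi> s t"
  define C where "C = (\<lambda>t. card {t'. t' < t \<and> (\<exists>g\<in>G. (g, s t') \<in> E)})"
  have "C t \<le> C (Suc t)"
    unfolding C_def by (rule card_mono) auto
  have "finite (M \<inter> G)"
    by (simp add: M_def finite_ranking_run)
  show ?case
  proof (cases rule: ranking_step_cases[of I E \<pi> "s t" M])
    case reject
    then show ?thesis
      using Suc.IH \<open>C t \<le> C (Suc t)\<close> by (simp add: M_def C_def)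
  next
    case (match x)
    show ?thesis
    proof (cases "\<exists>g\<in>G. (g, s t) \<in> E")
      case True
      then have "{t'. t' < Suc t \<and> (\<exists>g\<in>G. (g, s t') \<in> E)} = insert t {t'. t' < t \<and> (\<exists>g\<in>G. (g, s t') \<in> E)}"
        by (auto simp: less_Suc_eq)
      then have "C (Suc t) = Suc (C t)"
        by (simp add: C_def)
      moreover have "card (insert x M \<inter> G) \<le> card (insert x (M \<inter> G))"
        using \<open>finite (M \<inter> G)\<close> by (intro card_mono) auto
      moreover have "card (insert x (M \<inter> G)) \<le> Suc (card (M \<inter> G))"
        using \<open>finite (M \<inter> G)\<close> by (simp add: card_insert_if)
      ultimately show ?thesis
        using Suc.IH match(4) by (simp add: M_def C_def)
    next
      case False
      then have "insert x M \<inter> G = M \<inter> G"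
        using match(2) by auto
      then show ?thesis
        using Suc.IH match(4) \<open>C t \<le> C (Suc t)\<close> by (simp add: M_def C_def)
    qed
  qed
qed simp

lemma ranking_run_matched_before:
  assumes "i \<in> ranking_run I E \<pi> s t"
  shows "\<exists>t'<t. (i, s t') \<in> E \<and> (\<forall>y\<in>I. (y, s t') \<in> E \<and> \<pi> y < \<pi> i \<longrightarrow> y \<in> ranking_run I E \<pi> s t)"
  using assms
proof (induction t)
  case (Suc t)
  define M where "M = ranking_run I E \<pi> s t"
  have "M \<subseteq> ranking_run I E \<pi> s (Suc t)"
    by (simp add: M_def subset_ranking_step)
  show ?case
  proof (cases "i \<in> M")
    case True
    then show ?thesis
      using Suc.IH \<open>M \<subseteq> _\<close> by (force simp: M_def less_Suc_eq)
  next
    case False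
    show ?thesis
    proof (cases rule: ranking_step_cases[of I E \<pi> "s t" M])
      case reject
      then show ?thesis
        using Suc.prems False by (simp add: M_def)
    next
      case (match x)
      then have "i = x"
        using Suc.prems False by (simp add: M_def)
      then show ?thesis
        using match \<open>M \<subseteq> _\<close> by (intro exI[of _ t]) (force simp: not_le[symmetric])
    qed
  qed
qed simp

section \<open>The hard instance\<close>

lemma hard_edges_iff:
  "(i, j) \<in> hard_edges n \<longleftrightarrow> (j = 1 \<and> i \<in> {1..n}) \<or> (i = j \<and> j \<in> {2..n})"
  unfolding hard_edges_def by auto

lemma rank_within_first_le_count:
  assumes \<pi>: "\<pi> permutes {1..n}" and matched: "1 \<in> ranking_run {1..n} (hard_edges n) \<pi> s n"
  shows "rank_within (insert 1 (unseen {2..n} n s)) \<pi> 1 \<le> card {t. t < n \<and> s t = 1}"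
proof -
  let ?R = "ranking_run {1..n} (hard_edges n) \<pi> s n"
  let ?G = "insert 1 (unseen {2..n} n s)"
  obtain t where "(1, s t) \<in> hard_edges n"
    and above: "\<And>y. y \<in> {1..n} \<Longrightarrow> (y, s t) \<in> hard_edges n \<Longrightarrow> \<pi> y < \<pi> 1 \<Longrightarrow> y \<in> ?R"
    using ranking_run_matched_before[OF matched] by blast
  then have "s t = 1"
    by (auto simp: hard_edges_iff)
  have "{g \<in> ?G. \<pi> g \<le> \<pi> 1} \<subseteq> ?R \<inter> ?G"
  proof
    fix g assume g: "g \<in> {g \<in> ?G. \<pi> g \<le> \<pi> 1}"
    moreover have "\<pi> g \<noteq> \<pi> 1" if "g \<noteq> 1"
      using that permutes_inj[OF \<pi>] by (auto dest: injD)
    ultimately show "g \<in> ?R \<inter> ?G"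
      using matched above[of g] \<open>s t = 1\<close> by (force simp: unseen_def hard_edges_iff)
  qed
  then have "rank_within ?G \<pi> 1 \<le> card (?R \<inter> ?G)"
    unfolding rank_within_def by (intro card_mono) (simp_all add: finite_ranking_run)
  also have "\<dots> \<le> card {t. t < n \<and> (\<exists>g\<in>?G. (g, s t) \<in> hard_edges n)}"
    by (rule card_ranking_run_Int_le)
  also have "\<dots> \<le> card {t. t < n \<and> s t = 1}"
    by (intro card_mono) (auto simp: unseen_def hard_edges_iff)
  finally show ?thesis .
qed

lemma card_permutes_first_matched_le:
  assumes "n \<ge> 1"
  shows "card {\<pi>. \<pi> permutes {1..n} \<and> 1 \<in> ranking_run {1..n} (hard_edges n) \<pi> s n}
      * (card (unseen {2..n} n s) + 1)
    \<le> card {\<pi>. \<pi> permutes {1..n}} * card {t. t < n \<and> s t = 1}"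
proof -
  let ?G = "insert 1 (unseen {2..n} n s)"
  let ?K = "card {t. t < n \<and> s t = 1}"
  have G: "?G \<subseteq> {1..n}" "card ?G = card (unseen {2..n} n s) + 1"
    using assms by (auto simp: unseen_def)
  have "card {\<pi>. \<pi> permutes {1..n} \<and> 1 \<in> ranking_run {1..n} (hard_edges n) \<pi> s n}
      \<le> card {\<pi>. \<pi> permutes {1..n} \<and> rank_within ?G \<pi> 1 \<le> ?K}"
    using rank_within_first_le_count by (intro card_mono) (auto simp: finite_permutations)
  then have "card {\<pi>. \<pi> permutes {1..n} \<and> 1 \<in> ranking_run {1..n} (hard_edges n) \<pi> s n} * card ?G
      \<le> card ?G * card {\<pi>. \<pi> permutes {1..n} \<and> rank_within ?G \<pi> 1 \<le> ?K}"
    by simp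
  also have "\<dots> \<le> card {\<pi>. \<pi> permutes {1..n}} * ?K"
    using G by (intro card_permutes_rank_within_le) auto
  finally show ?thesis
    by (simp only: G(2))
qed

lemma ranking_match_prob_first_le:
  assumes n: "n \<ge> 2"
  shows "ranking_match_prob {1..n} {1..n} (hard_edges n) n 1 \<le> 12 * exp 2 / real n"
proof -
  define P where "P = {\<pi>. \<pi> permutes {1..n::nat}}"
  define S where "S = PiE {..<n} (\<lambda>_. {1..n::nat})"
  define K where "K s = real (card {t. t < n \<and> s t = 1})" for s :: "nat \<Rightarrow> nat"
  define F where "F s = 1 / (real (card (unseen {2..n} n s)) + 1)" for s
  have "id \<in> P"
    by (simp add: P_def permutes_id)
  then have P: "finite P" "P \<noteq> {}"
    by (auto simp only: P_def finite_permutations finite_atLeastAtMost)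
  have S: "finite S" "S \<noteq> {}" "real (card S) = real n ^ n"
    using n by (auto simp: S_def finite_PiE card_PiE PiE_eq_empty_iff)
  have matched: "real (card {\<pi> \<in> P. 1 \<in> ranking_run {1..n} (hard_edges n) \<pi> s n})
      \<le> real (card P) * (K s * F s)" for s
    using card_permutes_first_matched_le[of n s] n
    by (simp add: P_def K_def F_def field_simps flip: of_nat_mult)
  have "F (s(t := 1)) \<le> F s" for s t
    using card_mono[OF finite_unseen unseen_fun_upd, of "{2..n}" 1 n s t]
    by (simp add: F_def frac_le)
  then have "(\<Sum>s\<in>S. K s * F s) \<le> (\<Sum>s\<in>S. F s)"
    using sum_PiE_count_le[of "{1..n}" 1 n F] n by (simp add: S_def K_def)
  then have sum_KF: "(\<Sum>s\<in>S. K s * F s) \<le> 12 * exp 2 * real n ^ n / real n"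
    using n sum_inverse_card_unseen_le[OF n] by (simp add: S_def F_def)
  have "ranking_match_prob {1..n} {1..n} (hard_edges n) n 1
      = (\<Sum>s\<in>S. real (card {\<pi> \<in> P. 1 \<in> ranking_run {1..n} (hard_edges n) \<pi> s n}))
        / (real (card P) * real (card S))"
    unfolding ranking_match_prob_def arrivals_def P_def[symmetric] S_def[symmetric]
    using P S by (simp add: measure_pair_pmf_of_set)
  also have "\<dots> \<le> real (card P) * (\<Sum>s\<in>S. K s * F s) / (real (card P) * real (card S))"
    using P S matched by (intro divide_right_mono) (auto simp: sum_distrib_left intro: sum_mono)
  also have "\<dots> \<le> real (card P) * (12 * exp 2 * real n ^ n / real n) / (real (card P) * real (card S))"
    using sum_KF by (intro divide_right_mono mult_left_mono) auto
  also have "\<dots> = 12 * exp 2 / real n"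
    using P S n by (simp add: card_gt_0_iff)
  finally show ?thesis .
qed

definition first_arrival_matching :: "nat \<Rightarrow> (nat \<Rightarrow> nat) \<Rightarrow> nat \<Rightarrow> nat option" where
  "first_arrival_matching T s t = (if t < T \<and> (\<forall>t'<t. s t' \<noteq> s t) then Some (s t) else None)"

lemma first_arrival_matching_eq_Some_iff:
  "first_arrival_matching T s t = Some i \<longleftrightarrow> t < T \<and> s t = i \<and> (\<forall>t'<t. s t' \<noteq> i)"
  by (auto simp: first_arrival_matching_def)

lemma first_arrival_matching_valid:
  assumes "J \<subseteq> I" "\<And>j. j \<in> J \<Longrightarrow> (j, j) \<in> E" "s \<in> PiE {..<T} (\<lambda>_. J)"
  shows "valid_matching I E T s (first_arrival_matching T s)"
proof -
  have "t1 = t2" if "first_arrival_matching T s t1 = Some i" "first_arrival_matching T s t2 = Some i"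
    for t1 t2 i
  proof (rule ccontr)
    assume "t1 \<noteq> t2"
    then consider "t1 < t2" | "t2 < t1"
      by linarith
    then show False
      using that unfolding first_arrival_matching_eq_Some_iff by cases auto
  qed
  moreover have "i \<in> I \<and> (i, s t) \<in> E" if "first_arrival_matching T s t = Some i" for t i
  proof -
    have "t < T" "s t = i"
      using that by (simp_all add: first_arrival_matching_eq_Some_iff)
    then have "i \<in> J"
      using PiE_mem[OF assms(3)] by auto
    then show ?thesis
      using assms(1,2) \<open>s t = i\<close> by auto
  qed
  moreover have "first_arrival_matching T s t = None" if "T \<le> t" for t
    using that by (simp add: first_arrival_matching_def)
  ultimately show ?thesis
    unfolding valid_matching_def by blast
qed

lemma first_arrival_matching_matches_iff:
  "(\<exists>t<T. first_arrival_matching T s t = Some i) \<longleftrightarrow> (\<exists>t<T. s t = i)"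
proof
  assume "\<exists>t<T. s t = i"
  then obtain t where t: "t < T" "s t = i"
    by blast
  define t0 where "t0 = (LEAST t. s t = i)"
  have "s t0 = i" "t0 \<le> t"
    unfolding t0_def using t(2) by (auto intro: LeastI Least_le)
  moreover have "\<forall>t'<t0. s t' \<noteq> i"
    unfolding t0_def using not_less_Least by blast
  ultimately show "\<exists>t<T. first_arrival_matching T s t = Some i"
    using t(1) by (intro exI[of _ t0]) (auto simp: first_arrival_matching_def)
qed (auto simp: first_arrival_matching_def split: if_splits)

lemma clair_match_prob_first_arrival_matching:
  assumes J: "finite J" "i \<in> J"
  shows "clair_match_prob J T (\<lambda>s. return_pmf (first_arrival_matching T s)) i
    = 1 - (1 - 1 / real (card J)) ^ T"
proof -
  define S where "S = PiE {..<T} (\<lambda>_. J)"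
  have S: "finite S" "S \<noteq> {}" "card S = card J ^ T"
    using J by (auto simp: S_def finite_PiE card_PiE PiE_eq_empty_iff)
  have "card J > 0"
    using J card_gt_0_iff by blast
  have avoid: "card {s \<in> S. \<forall>t<T. s t \<notin> {i}} = (card J - 1) ^ T"
    using J card_PiE_avoiding[of J "{i}" T] by (simp add: S_def)
  have "S \<inter> {s. \<exists>t<T. first_arrival_matching T s t = Some i} = S - {s \<in> S. \<forall>t<T. s t \<notin> {i}}"
    using first_arrival_matching_matches_iff by auto
  then have "clair_match_prob J T (\<lambda>s. return_pmf (first_arrival_matching T s)) i
      = real (card (S - {s \<in> S. \<forall>t<T. s t \<notin> {i}})) / real (card S)"
    using S by (simp add: clair_match_prob_def arrivals_def S_def[symmetric] measure_pmf_of_set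
        flip: map_pmf_def)
  also have "\<dots> = 1 - real ((card J - 1) ^ T) / real (card J ^ T)"
    using S avoid power_mono[of "card J - 1" "card J" T] \<open>card J > 0\<close>
    by (simp add: card_Diff_subset of_nat_diff diff_divide_distrib)
  also have "\<dots> = 1 - (1 - 1 / real (card J)) ^ T"
    using \<open>card J > 0\<close> by (simp add: of_nat_diff diff_divide_distrib flip: power_divide)
  finally show ?thesis .
qed

lemma Min_clair_match_prob_le_clair_opt:
  assumes "finite I" "I \<noteq> {}" "clairvoyant_policy I J E T P"
  shows "Min (clair_match_prob J T P ` I) \<le> clair_opt I J E T"
proof -
  have "Min (clair_match_prob J T Q ` I) \<le> 1" for Q
  proof -
    obtain i where "i \<in> I"
      using assms by blast
    then have "Min (clair_match_prob J T Q ` I) \<le> clair_match_prob J T Q i"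
      using assms by (intro Min_le) auto
    also have "\<dots> \<le> 1"
      by (simp add: clair_match_prob_def)
    finally show ?thesis .
  qed
  then show ?thesis
    unfolding clair_opt_def using assms by (intro cSUP_upper bdd_aboveI2) auto
qed

lemma clair_opt_hard_ge:
  assumes "n \<ge> 1"
  shows "1 - 1 / exp 1 \<le> clair_opt {1..n} {1..n} (hard_edges n) n"
proof -
  let ?P = "\<lambda>s. return_pmf (first_arrival_matching n s)"
  have "valid_matching {1..n} (hard_edges n) n s (first_arrival_matching n s)"
    if "s \<in> PiE {..<n} (\<lambda>_. {1..n})" for s
    by (rule first_arrival_matching_valid[OF _ _ that]) (auto simp: hard_edges_iff)
  then have "clairvoyant_policy {1..n} {1..n} (hard_edges n) n ?P"
    by (simp add: clairvoyant_policy_def)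
  then have "Min (clair_match_prob {1..n} n ?P ` {1..n}) \<le> clair_opt {1..n} {1..n} (hard_edges n) n"
    using assms by (intro Min_clair_match_prob_le_clair_opt) auto
  moreover have "clair_match_prob {1..n} n ?P ` {1..n} = {1 - (1 - 1 / real n) ^ n}"
    using assms by (auto simp: clair_match_prob_first_arrival_matching)
  moreover have "(1 - 1 / real n) ^ n \<le> 1 / exp 1"
    using one_minus_inverse_power_le_exp[OF assms] by (simp add: exp_minus inverse_eq_divide)
  ultimately show ?thesis
    by simp
qed

lemma LIMSEQ_zero_if_le_const_over_n:
  fixes f :: "nat \<Rightarrow> real"
  assumes "\<And>n. n \<ge> N \<Longrightarrow> 0 \<le> f n \<and> f n \<le> C / real n"
  shows "f \<longlonglongrightarrow> 0"
proof (rule tendsto_sandwich[of "\<lambda>_. 0" _ _ "\<lambda>n. C / real n"])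
  show "\<forall>\<^sub>F n in sequentially. 0 \<le> f n" "\<forall>\<^sub>F n in sequentially. f n \<le> C / real n"
    using assms by (auto simp: eventually_sequentially)
qed (simp_all add: lim_const_over_n)

lemma Min_ranking_match_prob_le:
  assumes n: "n \<ge> 2"
  shows "0 \<le> Min (ranking_match_prob {1..n} {1..n} (hard_edges n) n ` {1..n})"
    and "Min (ranking_match_prob {1..n} {1..n} (hard_edges n) n ` {1..n}) \<le> 12 * exp 2 / real n"
proof -
  have "Min (ranking_match_prob {1..n} {1..n} (hard_edges n) n ` {1..n})
      \<in> ranking_match_prob {1..n} {1..n} (hard_edges n) n ` {1..n}"
    using n by (intro Min_in) auto
  then show "0 \<le> Min (ranking_match_prob {1..n} {1..n} (hard_edges n) n ` {1..n})"
    by (auto simp: ranking_match_prob_def)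
  have "Min (ranking_match_prob {1..n} {1..n} (hard_edges n) n ` {1..n})
      \<le> ranking_match_prob {1..n} {1..n} (hard_edges n) n 1"
    using n by (intro Min_le) auto
  then show "Min (ranking_match_prob {1..n} {1..n} (hard_edges n) n ` {1..n}) \<le> 12 * exp 2 / real n"
    using ranking_match_prob_first_le[OF n] by linarith
qed

lemma ranking_ratio_le:
  fixes n :: nat
  defines "M \<equiv> Min (ranking_match_prob {1..n} {1..n} (hard_edges n) n ` {1..n})"
    and "Q \<equiv> clair_opt {1..n} {1..n} (hard_edges n) n"
    and "c \<equiv> 1 - 1 / exp 1 :: real"
  assumes n: "n \<ge> 2"
  shows "0 \<le> M / Q \<and> M / Q \<le> 12 * exp 2 / c / real n"
proof
  have "0 \<le> M" "M \<le> 12 * exp 2 / real n"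
    using Min_ranking_match_prob_le[OF n] by (simp_all add: M_def)
  have "c > 0" "c \<le> Q"
    using n clair_opt_hard_ge[of n] by (auto simp: c_def Q_def)
  then have "Q > 0"
    by (rule order.strict_trans2)
  then show "0 \<le> M / Q"
    using \<open>0 \<le> M\<close> by simp
  have "0 < Q * c"
    using \<open>Q > 0\<close> \<open>c > 0\<close> by (rule mult_pos_pos)
  with \<open>c \<le> Q\<close> \<open>0 \<le> M\<close> have "M / Q \<le> M / c"
    by (rule divide_left_mono)
  also have "\<dots> \<le> 12 * exp 2 / real n / c"
    using \<open>M \<le> _\<close> \<open>c > 0\<close> by (intro divide_right_mono) auto
  finally show "M / Q \<le> 12 * exp 2 / c / real n"
    by (simp add: field_simps)
qed

theorem mainTheorem4:
  shows "(\<forall>n::nat. 2 \<le> n \<longrightarrow> clair_opt {1..n} {1..n} (hard_edges n) n \<ge> 1 - 1 / exp 1)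
    \<and> (\<exists>C::real. \<forall>n::nat. 2 \<le> n \<longrightarrow>
          ranking_match_prob {1..n} {1..n} (hard_edges n) n 1 \<le> C / real n)
    \<and> ((\<lambda>n. Min ((ranking_match_prob {1..n} {1..n} (hard_edges n) n) ` {1..n})
             / clair_opt {1..n} {1..n} (hard_edges n) n) \<longlonglongrightarrow> 0)"
proof (intro conjI)
  show "\<forall>n::nat. 2 \<le> n \<longrightarrow> clair_opt {1..n} {1..n} (hard_edges n) n \<ge> 1 - 1 / exp 1"
    using clair_opt_hard_ge by simp
  show "\<exists>C::real. \<forall>n::nat. 2 \<le> n \<longrightarrow> ranking_match_prob {1..n} {1..n} (hard_edges n) n 1 \<le> C / real n"
    using ranking_match_prob_first_le by blast
  show "(\<lambda>n. Min ((ranking_match_prob {1..n} {1..n} (hard_edges n) n) ` {1..n})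
      / clair_opt {1..n} {1..n} (hard_edges n) n) \<longlonglongrightarrow> 0"
    using ranking_ratio_le by (intro LIMSEQ_zero_if_le_const_over_n[of 2]) blast
qed

end
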